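(* Let $j_1,j_2$ be real numbers, $p\in\{0,1\}$, and let $\Psi_1$ (of parity $p$) and $\Psi_2$ be the generating highest-weight vectors of two $\mathfrak{sl}(2|1)$-modules of the same chirality: either both left-chiral, $[j_1,-j_1]$ and $[j_2,-j_2]$ (upper signs, $\mathbf X=\mathbf V_+$), or both right-chiral, $[j_1,j_1]$ and $[j_2,j_2]$ (lower signs, $\mathbf X=\mathbf W_+$). Let $\mathbf U_+=\mathbf V_++\mathbf W_+$. Then for every $n\ge 0$, $$n!\,(-1)^{p+1}\sum_{k_1+k_2=2n+1}\frac{(-1)^{\lfloor (k_1+1-p)/2\rfloor}}{\Gamma\!\left(1+\lfloor\frac{k_1}{2}\rfloor\right)\Gamma\!\left(1+\lfloor\frac{k_2}{2}\rfloor\right)\Gamma\!\left(2j_1+\lfloor\frac{k_1+1}{2}\rfloor\right)\Gamma\!\left(2j_2+\lfloor\frac{k_2+1}{2}\rfloor\right)}\ \mathbf U_+^{k_1}\Psi_1\otimes\mathbf U_+^{k_2}\Psi_2$$ equals $$\sum_{n_1+n_2=n}\binom{n}{n_1}(-1)^{n_1}\left[\frac{\mathbf L_+^{n_1}\mathbf X\Psi_1\otimes\mathbf L_+^{n_2}\Psi_2}{\Gamma(2j_1+1+n_1)\Gamma(2j_2+n_2)}-(-1)^p\frac{\mathbf L_+^{n_1}\Psi_1\otimes\mathbf L_+^{n_2}\mathbf X\Psi_2}{\Gamma(2j_1+n_1)\Gamma(2j_2+1+n_2)}\right],$$ and this vector is a highest-weight vector of the tensor product, with $\mathbf L$-eigenvalue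 $j_1+j_2+n+\tfrac12$ and $\mathbf B$-eigenvalue $\mp(j_1+j_2)\pm\tfrac12$.
   Context: $\mathfrak{sl}(2|1)$ denotes the complex Lie superalgebra with even basis $\mathbf L_+,\mathbf L_-,\mathbf L,\mathbf B$ and odd basis $\mathbf V_+,\mathbf V_-,\mathbf W_+,\mathbf W_-$, with relations: $[\mathbf L_+,\mathbf L_-]=2\mathbf L$, $[\mathbf L,\mathbf L_\pm]=\pm\mathbf L_\pm$, $\mathbf B$ commutes with $\mathbf L_\pm,\mathbf L$; for $\mathbf X\in\{\mathbf V,\mathbf W\}$: $[\mathbf L,\mathbf X_\pm]=\pm\tfrac12\mathbf X_\pm$, $[\mathbf L_+,\mathbf X_-]=\mathbf X_+$, $[\mathbf L_-,\mathbf X_+]=\mathbf X_-$, $[\mathbf L_+,\mathbf X_+]=[\mathbf L_-,\mathbf X_-]=0$; $[\mathbf B,\mathbf V_\pm]=\tfrac12\mathbf V_\pm$, $[\mathbf B,\mathbf W_\pm]=-\tfrac12\mathbf W_\pm$; $\{\mathbf V_a,\mathbf V_b\}=\{\mathbf W_a,\mathbf W_b\}=0$, $\{\mathbf V_+,\mathbf W_+\}=\mathbf L_+$, $\{\mathbf V_+,\mathbf W_-\}=-\mathbf L+\mathbf B$, $\{\mathbf V_-,\mathbf W_+\}=-\mathbf L-\mathbf B$, $\{\mathbf V_-,\mathbf W_-\}=-\mathbf L_-$. The left-chiral module $[J,-J]$ is the $\mathbb Z_2$-graded module generated by a homogeneous vector $\Omega$ with $\mathbf L_-\Omega=\mathbf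 V_-\Omega=\mathbf W_-\Omega=\mathbf W_+\Omega=0$, $\mathbf L\Omega=J\Omega$, $\mathbf B\Omega=-J\Omega$ (basis $\mathbf L_+^n\Omega,\mathbf L_+^n\mathbf V_+\Omega$); the right-chiral module $[J,J]$ is generated by $\Omega$ with $\mathbf L_-\Omega=\mathbf V_-\Omega=\mathbf W_-\Omega=\mathbf V_+\Omega=0$, $\mathbf L\Omega=J\Omega$, $\mathbf B\Omega=J\Omega$ (basis $\mathbf L_+^n\Omega,\mathbf L_+^n\mathbf W_+\Omega$). A highest-weight vector is one annihilated by $\mathbf L_-,\mathbf V_-,\mathbf W_-$. Tensor products carry the action $G(x\otimes y)=Gx\otimes y+(-1)^{|G||x|}x\otimes Gy$ for homogeneous $G,x$. Here $1/\Gamma$ is the (entire) reciprocal Gamma function and $\lfloor\cdot\rfloor$ the floor function. *)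

theory Defs
  imports "HOL-Analysis.Analysis"
begin

text \<open>Generators of sl(2|1): even Lp, Lm, L0 (= L), Bg (= B); odd Vp, Vm, Wp, Wm.\<close>
datatype gen = Lp | Lm | L0 | Bg | Vp | Vm | Wp | Wm

definition odd_gen :: "gen \<Rightarrow> bool" where
  "odd_gen G \<longleftrightarrow> G \<in> {Vp, Vm, Wp, Wm}"

text \<open>Chiral module of chirality c (c = True: left-chiral [J,-J] with X = V+;
  c = False: right-chiral [J,J] with X = W+).  Basis index (n, False) stands for
  L+^n Omega and (n, True) for L+^n X Omega.  Vectors are coefficient functions
  on the basis.  mcoef c J G a b is the coefficient of basis vector a in G applied
  to basis vector b; these are the matrix entries forced by the defining relations.\<close>
type_synonym idx = "nat \<times> bool"
type_synonym vec = "idx \<Rightarrow> complex"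
type_synonym tvec = "idx \<times> idx \<Rightarrow> complex"

fun mcoef :: "bool \<Rightarrow> real \<Rightarrow> gen \<Rightarrow> idx \<Rightarrow> idx \<Rightarrow> complex" where
  "mcoef c J Lp (m, y) (n, x) = (if m = Suc n \<and> y = x then 1 else 0)"
| "mcoef c J Lm (m, y) (n, x) =
     (if Suc m = n \<and> y = x then
        (if x then - of_nat n * (2 * of_real J + of_nat n)
         else - of_nat n * (2 * of_real J + of_nat n - 1)) else 0)"
| "mcoef c J L0 (m, y) (n, x) =
     (if m = n \<and> y = x then of_real J + of_nat n + (if x then 1/2 else 0) else 0)"
| "mcoef c J Bg (m, y) (n, x) =
     (if m = n \<and> y = x then
        (if c then - of_real J + (if x then 1/2 else 0)
         else of_real J - (if x then 1/2 else 0)) else 0)"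
| "mcoef c J Vp (m, y) (n, x) =
     (if c then (if \<not> x \<and> y \<and> m = n then 1 else 0)
      else (if x \<and> \<not> y \<and> m = Suc n then 1 else 0))"
| "mcoef c J Wp (m, y) (n, x) =
     (if \<not> c then (if \<not> x \<and> y \<and> m = n then 1 else 0)
      else (if x \<and> \<not> y \<and> m = Suc n then 1 else 0))"
| "mcoef c J Vm (m, y) (n, x) =
     (if c then (if \<not> x \<and> y \<and> Suc m = n then - of_nat n else 0)
      else (if x \<and> \<not> y \<and> m = n then - (2 * of_real J + of_nat n) else 0))"
| "mcoef c J Wm (m, y) (n, x) =
     (if \<not> c then (if \<not> x \<and> y \<and> Suc m = n then - of_nat n else 0)
      else (if x \<and> \<not> y \<and> m = n then - (2 * of_real J + of_nat n) else 0))"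

text \<open>Action on a vector (only basis vectors b with fst b \<le> fst a + 1 can contribute to a).\<close>
definition act :: "bool \<Rightarrow> real \<Rightarrow> gen \<Rightarrow> vec \<Rightarrow> vec" where
  "act c J G v = (\<lambda>a. \<Sum>b\<in>{b. fst b \<le> Suc (fst a)}. mcoef c J G a b * v b)"

definition basis_vec :: "idx \<Rightarrow> vec" where
  "basis_vec a = (\<lambda>b. if b = a then 1 else 0)"

definition Omega :: vec where "Omega = basis_vec (0, False)"

definition Xgen :: "bool \<Rightarrow> gen" where "Xgen c = (if c then Vp else Wp)"

definition Uplus :: "bool \<Rightarrow> real \<Rightarrow> vec \<Rightarrow> vec" where
  "Uplus c J v = (\<lambda>a. act c J Vp v a + act c J Wp v a)"

definition par :: "nat \<Rightarrow> idx \<Rightarrow> nat" where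
  "par p a = (p + (if snd a then 1 else 0)) mod 2"

text \<open>Tensor product: vectors are coefficient functions on pairs of basis indices;
  pure tensor, and the action G(x\<otimes>y) = Gx\<otimes>y + (-1)^(|G||x|) x\<otimes>Gy, where the
  first factor's generating vector has parity p.\<close>
definition tens :: "vec \<Rightarrow> vec \<Rightarrow> tvec" where
  "tens x y = (\<lambda>(a, b). x a * y b)"

definition tact :: "bool \<Rightarrow> real \<Rightarrow> real \<Rightarrow> nat \<Rightarrow> gen \<Rightarrow> tvec \<Rightarrow> tvec" where
  "tact c J1 J2 p G w = (\<lambda>(a1, a2).
      (\<Sum>b1\<in>{b. fst b \<le> Suc (fst a1)}. mcoef c J1 G a1 b1 * w (b1, a2))
    + (if odd_gen G \<and> par p a1 = 1 then -1 else 1) *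
      (\<Sum>b2\<in>{b. fst b \<le> Suc (fst a2)}. mcoef c J2 G a2 b2 * w (a1, b2)))"

lemma finite_idx_le: "finite {b :: idx. fst b \<le> k}"
proof -
  have "{b :: idx. fst b \<le> k} \<subseteq> {..k} \<times> UNIV" by auto
  thus ?thesis by (rule finite_subset) auto
qed

lemma Omega_conditions:
  "act c J Lm Omega = (\<lambda>_. 0)" "act c J Vm Omega = (\<lambda>_. 0)" "act c J Wm Omega = (\<lambda>_. 0)"
  "act c J (if c then Wp else Vp) Omega = (\<lambda>_. 0)"
  "act c J L0 Omega = (\<lambda>a. of_real J * Omega a)"
  "act c J Bg Omega = (\<lambda>a. (if c then - of_real J else of_real J) * Omega a)"
  by (auto simp: act_def Omega_def basis_vec_def fun_eq_iff if_distrib[of "\<lambda>x. _ * x"]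
           sum.delta finite_idx_le split: prod.splits cong: if_cong)

end

theory Submission
  imports Defs
begin

(* Since U+ alternately
   applies X and L+ to Omega, U+^k Omega = L+^(k div 2) X^(k mod 2) Omega; hence both sides collapse
   onto the coordinates with m1 + m2 = n and exactly one X, where the weight
   n! / (m1! m2! Gamma(..) Gamma(..)) of the left-hand side is the binomial coefficient of the
   right-hand side.  For the highest-weight property every lowering operator sends the vector to
   coordinates that are sums of two neighbouring terms, and these cancel by x * rGamma (x + 1) =
   rGamma x; as rGamma is entire this also holds at the poles of Gamma, so no condition on
   j1, j2 is needed. *)

definition rGamma_weight :: "real \<Rightarrow> real \<Rightarrow> nat \<Rightarrow> nat \<Rightarrow> complex" where
  "rGamma_weight a b k l =
     of_real (rGamma (1 + real k) * rGamma (1 + real l) * rGamma (a + real k) * rGamma (b + real l))"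

lemma rGamma_weight_shift_left:
  "(of_real a + of_nat k) * rGamma_weight (a + 1) b k l = rGamma_weight a b k l"
proof -
  have "rGamma (a + real k) = (a + real k) * rGamma (a + 1 + real k)"
    using rGamma_plus1[of "a + real k"] by (simp add: add_ac)
  then show ?thesis by (simp add: rGamma_weight_def mult_ac)
qed

lemma rGamma_weight_shift_right:
  "(of_real b + of_nat l) * rGamma_weight a (b + 1) k l = rGamma_weight a b k l"
proof -
  have "rGamma (b + real l) = (b + real l) * rGamma (b + 1 + real l)"
    using rGamma_plus1[of "b + real l"] by (simp add: add_ac)
  then show ?thesis by (simp add: rGamma_weight_def mult_ac)
qed

lemma rGamma_weight_Suc_left:
  "(of_nat k + 1) * rGamma_weight a b (Suc k) l = rGamma_weight (a + 1) b k l"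
proof -
  have "rGamma (1 + real k) = (real k + 1) * rGamma (1 + real (Suc k))"
    using rGamma_plus1[of "1 + real k"] by (simp add: add_ac)
  then show ?thesis by (simp add: rGamma_weight_def mult_ac add_ac)
qed

lemma rGamma_weight_Suc_right:
  "(of_nat l + 1) * rGamma_weight a b k (Suc l) = rGamma_weight a (b + 1) k l"
proof -
  have "rGamma (1 + real l) = (real l + 1) * rGamma (1 + real (Suc l))"
    using rGamma_plus1[of "1 + real l"] by (simp add: add_ac)
  then show ?thesis by (simp add: rGamma_weight_def mult_ac add_ac)
qed

lemma rGamma_weight_Suc_left_shift:
  "(of_nat k + 1) * (of_real a + of_nat k) * rGamma_weight a b (Suc k) l = rGamma_weight a b k l"
  by (metis mult.assoc mult.commute rGamma_weight_Suc_left rGamma_weight_shift_left)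

lemma rGamma_weight_Suc_right_shift:
  "(of_nat l + 1) * (of_real b + of_nat l) * rGamma_weight a b k (Suc l) = rGamma_weight a b k l"
  by (metis mult.assoc mult.commute rGamma_weight_Suc_right rGamma_weight_shift_right)

lemma binomial_rGamma_weight:
  assumes "k \<le> n"
  shows "of_nat (n choose k) * of_real (rGamma (a + real k) * rGamma (b + real (n - k)))
           = fact n * rGamma_weight a b k (n - k)"
proof -
  have rGamma_fact: "rGamma (1 + real i) = inverse (fact i)" for i
    by (simp add: rGamma_inverse_Gamma Gamma_fact)
  have binomial: "real (n choose k) = fact n * rGamma (1 + real k) * rGamma (1 + real (n - k))"
    using binomial_fact[OF assms, where 'a = real] by (simp add: rGamma_fact field_simps)
  have "of_nat (n choose k) * of_real (rGamma (a + real k) * rGamma (b + real (n - k)))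
          = (of_real (real (n choose k) * (rGamma (a + real k) * rGamma (b + real (n - k)))) :: complex)"
    by simp
  also have "\<dots> = fact n * rGamma_weight a b k (n - k)"
    unfolding binomial rGamma_weight_def of_real_mult of_real_fact by (simp only: mult_ac)
  finally show ?thesis .
qed

lemma mcoef_eq_0_far: "\<not> fst b \<le> Suc (fst a) \<Longrightarrow> mcoef c J G a b = 0"
  by (cases a; cases b; cases G) auto

lemma act_basis_vec: "act c J G (basis_vec b) = (\<lambda>a. mcoef c J G a b)"
proof
  fix a
  have "act c J G (basis_vec b) a
      = (\<Sum>b'\<in>{b'. fst b' \<le> Suc (fst a)}. if b' = b then mcoef c J G a b else 0)"
    unfolding act_def basis_vec_def by (intro sum.cong) auto
  then show "act c J G (basis_vec b) a = mcoef c J G a b"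
    using mcoef_eq_0_far[of b a c J G] by (simp add: finite_idx_le)
qed

lemma Lp_power_basis_vec: "(act c J Lp ^^ k) (basis_vec (m, x)) = basis_vec (m + k, x)"
proof (induction k)
  case (Suc k)
  then show ?case
    unfolding funpow.simps comp_def Suc act_basis_vec by (auto simp: basis_vec_def)
qed simp

lemma Xgen_Omega: "act c J (Xgen c) Omega = basis_vec (0, True)"
  unfolding Omega_def act_basis_vec by (cases c) (auto simp: basis_vec_def Xgen_def)

lemma Lp_power_Omega: "(act c J Lp ^^ k) Omega = basis_vec (k, False)"
  using Lp_power_basis_vec[where m = 0 and x = False] by (simp add: Omega_def)

lemma Lp_power_Xgen_Omega: "(act c J Lp ^^ k) (act c J (Xgen c) Omega) = basis_vec (k, True)"
  using Lp_power_basis_vec[where m = 0 and x = True] by (simp add: Xgen_Omega)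

lemma Uplus_power_Omega: "(Uplus c J ^^ k) Omega = basis_vec (k div 2, odd k)"
proof (induction k)
  case (Suc k)
  then have "(Uplus c J ^^ Suc k) Omega = Uplus c J (basis_vec (k div 2, odd k))"
    by simp
  then show ?case
    unfolding Uplus_def act_basis_vec by (cases c) (auto simp: basis_vec_def fun_eq_iff)
qed (simp add: Omega_def)

lemma tens_basis_vec: "tens (basis_vec a) (basis_vec b) = (\<lambda>i. of_bool (i = (a, b)))"
  by (auto simp: tens_def basis_vec_def)

lemma odd_diff_div_two:
  fixes k n :: nat
  assumes "k \<le> 2 * n + 1"
  shows "(2 * n + 1 - k) div 2 = n - k div 2" and "odd (2 * n + 1 - k) \<longleftrightarrow> even k"
proof -
  have "2 * n + 1 - k = 2 * (n - k div 2) + of_bool (even k)"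
    using assms by (cases "even k") (auto elim!: evenE oddE)
  then show "(2 * n + 1 - k) div 2 = n - k div 2" and "odd (2 * n + 1 - k) \<longleftrightarrow> even k"
    by simp_all
qed

lemma Uplus_tensor_sum:
  "(\<Sum>k\<in>{0..2 * n + 1}. f k * tens ((Uplus c J1 ^^ k) Omega) ((Uplus c J2 ^^ (2 * n + 1 - k)) Omega)
                               ((m1, x1), (m2, x2)))
     = (if m1 + m2 = n \<and> x1 \<noteq> x2 then f (2 * m1 + of_bool x1) else 0)"
  (is "(\<Sum>k\<in>_. f k * ?coord k) = _")
proof -
  define K where "K = 2 * m1 + of_bool x1"
  define C where "C \<longleftrightarrow> m1 + m2 = n \<and> x1 \<noteq> x2"
  have "?coord k = of_bool (k = K \<and> C)" if "k \<le> 2 * n + 1" for k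
  proof -
    have "?coord k = of_bool (((m1, x1), (m2, x2)) = ((k div 2, odd k), (n - k div 2, even k)))"
      by (simp only: Uplus_power_Omega tens_basis_vec odd_diff_div_two[OF that])
    also have "((m1, x1), (m2, x2)) = ((k div 2, odd k), (n - k div 2, even k)) \<longleftrightarrow> k = K \<and> C"
      using that unfolding K_def C_def by auto
    finally show ?thesis .
  qed
  then have "(\<Sum>k\<in>{0..2 * n + 1}. f k * ?coord k)
      = (\<Sum>k\<in>{0..2 * n + 1}. if k = K then (if C then f K else 0) else 0)"
    by (intro sum.cong) auto
  also have "\<dots> = (if C then f K else 0)"
  proof -
    have "C \<Longrightarrow> K \<le> 2 * n + 1"
      unfolding C_def K_def by (cases x1) auto
    then show ?thesis by auto
  qed
  finally show ?thesis
    unfolding C_def K_def .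
qed

lemma Lplus_tensor_sum:
  "(\<Sum>k\<in>{0..n}. f k * tens ((act c J1 Lp ^^ k) (act c J1 (Xgen c) Omega)) ((act c J2 Lp ^^ (n - k)) Omega)
                             ((m1, x1), (m2, x2))
                   - g k * tens ((act c J1 Lp ^^ k) Omega) ((act c J2 Lp ^^ (n - k)) (act c J2 (Xgen c) Omega))
                             ((m1, x1), (m2, x2)))
     = (if m1 + m2 = n then (if x1 \<and> \<not> x2 then f m1 else if \<not> x1 \<and> x2 then - g m1 else 0) else 0)"
  (is "(\<Sum>k\<in>_. ?term k) = ?coord")
proof -
  have "(\<Sum>k\<in>{0..n}. ?term k) = (\<Sum>k\<in>{0..n}. if k = m1 then ?coord else 0)"
    by (intro sum.cong) (auto simp: Lp_power_Omega Lp_power_Xgen_Omega tens_basis_vec)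
  then show ?thesis
    by auto
qed

lemma tvec_eqI:
  fixes v w :: tvec
  assumes "\<And>m1 x1 m2 x2. v ((m1, x1), (m2, x2)) = w ((m1, x1), (m2, x2))"
  shows "v = w"
  using assms by (intro ext) auto

definition hw_vec :: "nat \<Rightarrow> real \<Rightarrow> real \<Rightarrow> nat \<Rightarrow> tvec" where
  "hw_vec n j1 j2 p = (\<lambda>((m1, x1), (m2, x2)).
     if m1 + m2 \<noteq> n then 0
     else if x1 \<and> \<not> x2 then fact n * (-1) ^ m1 * rGamma_weight (2 * j1 + 1) (2 * j2) m1 m2
     else if \<not> x1 \<and> x2 then - ((-1) ^ p * fact n * (-1) ^ m1 * rGamma_weight (2 * j1) (2 * j2 + 1) m1 m2)
     else 0)"

lemma Uplus_expansion_eq_hw_vec: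
  assumes "p \<in> {0, 1}"
  shows "(\<lambda>a. of_nat (fact n) * (-1) ^ (p + 1) *
            (\<Sum>k1\<in>{0..2 * n + 1}.
               (-1) ^ ((k1 + 1 - p) div 2) *
               of_real (rGamma (1 + real (k1 div 2)) * rGamma (1 + real ((2 * n + 1 - k1) div 2))
                        * rGamma (2 * j1 + real ((k1 + 1) div 2))
                        * rGamma (2 * j2 + real ((2 * n + 1 - k1 + 1) div 2))) *
               tens ((Uplus c j1 ^^ k1) Omega) ((Uplus c j2 ^^ (2 * n + 1 - k1)) Omega) a))
         = hw_vec n j1 j2 p"
  (is "(\<lambda>a. ?expansion a) = _")
proof (rule tvec_eqI)
  fix m1 x1 m2 x2
  from assms consider "p = 0" | "p = 1" by blast
  then show "?expansion ((m1, x1), (m2, x2)) = hw_vec n j1 j2 p ((m1, x1), (m2, x2))"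
    unfolding Uplus_tensor_sum
    by cases (cases x1; auto simp: hw_vec_def rGamma_weight_def add.assoc)+
qed

lemma Lplus_expansion_eq_hw_vec:
  "(\<lambda>a. \<Sum>n1\<in>{0..n}. of_nat (n choose n1) * (-1) ^ n1 *
        (of_real (rGamma (2 * j1 + 1 + real n1) * rGamma (2 * j2 + real (n - n1))) *
           tens ((act c j1 Lp ^^ n1) (act c j1 (Xgen c) Omega))
                ((act c j2 Lp ^^ (n - n1)) Omega) a
         - (-1) ^ p * of_real (rGamma (2 * j1 + real n1) * rGamma (2 * j2 + 1 + real (n - n1))) *
           tens ((act c j1 Lp ^^ n1) Omega)
                ((act c j2 Lp ^^ (n - n1)) (act c j2 (Xgen c) Omega)) a)) = hw_vec n j1 j2 p"
  (is "(\<lambda>a. ?expansion a) = _")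
proof (rule tvec_eqI)
  fix m1 x1 m2 x2
  show "?expansion ((m1, x1), (m2, x2)) = hw_vec n j1 j2 p ((m1, x1), (m2, x2))"
    unfolding right_diff_distrib mult.assoc[symmetric] Lplus_tensor_sum
    using binomial_rGamma_weight[of m1 n "2 * j1 + 1" "2 * j2"]
      binomial_rGamma_weight[of m1 n "2 * j1" "2 * j2 + 1"]
    by (auto simp: hw_vec_def mult_ac)
qed

(* For the generators that do not raise the level, the only basis index b for which G b has a
   nonzero a-coordinate; the last clause is junk for Lp, Vp and Wp. *)
fun source :: "bool \<Rightarrow> gen \<Rightarrow> idx \<Rightarrow> idx" where
  "source c Lm (m, x) = (Suc m, x)"
| "source c Vm (m, x) = (if c then (Suc m, False) else (m, True))"
| "source c Wm (m, x) = (if c then (m, True) else (Suc m, False))"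
| "source c G a = a"

lemma mcoef_eq_0_off_source:
  assumes "G \<in> {Lm, L0, Bg, Vm, Wm}" and "b \<noteq> source c G a"
  shows "mcoef c J G a b = 0"
proof -
  obtain m x n y where "a = (m, x)" and "b = (n, y)" by fastforce
  with assms show ?thesis by (cases x; cases y; cases c; cases G) simp_all
qed

lemma sum_mcoef_non_raising:
  assumes "G \<in> {Lm, L0, Bg, Vm, Wm}"
  shows "(\<Sum>b\<in>{b. fst b \<le> Suc (fst a)}. mcoef c J G a b * v b)
           = mcoef c J G a (source c G a) * v (source c G a)"
proof -
  have "fst (source c G a) \<le> Suc (fst a)"
    by (cases a; cases G) auto
  moreover have "(\<Sum>b\<in>{b. fst b \<le> Suc (fst a)}. mcoef c J G a b * v b)
      = (\<Sum>b\<in>{b. fst b \<le> Suc (fst a)}.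
           if b = source c G a then mcoef c J G a (source c G a) * v (source c G a) else 0)"
    using mcoef_eq_0_off_source[OF assms] by (intro sum.cong) auto
  ultimately show ?thesis by (simp add: finite_idx_le)
qed

lemma tact_non_raising:
  assumes "G \<in> {Lm, L0, Bg, Vm, Wm}"
  shows "tact c J1 J2 p G w (a1, a2)
           = mcoef c J1 G a1 (source c G a1) * w (source c G a1, a2)
             + (-1) ^ (if odd_gen G then p + of_bool (snd a1) else 0)
               * (mcoef c J2 G a2 (source c G a2) * w (a1, source c G a2))"
proof -
  have "par p a1 = 1 \<longleftrightarrow> odd (p + of_bool (snd a1))"
    unfolding par_def odd_iff_mod_2_eq_one by simp
  then have "(if odd_gen G \<and> par p a1 = 1 then -1 else 1 :: complex)
               = (-1) ^ (if odd_gen G then p + of_bool (snd a1) else 0)"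
    by (simp add: minus_one_power_iff)
  then show ?thesis
    by (simp add: tact_def sum_mcoef_non_raising[OF assms])
qed

lemma tact_Lm:
  "tact c J1 J2 p Lm w ((m1, x1), (m2, x2))
     = - (of_nat m1 + 1) * (2 * of_real J1 + of_nat m1 + of_bool x1) * w ((Suc m1, x1), (m2, x2))
       - (of_nat m2 + 1) * (2 * of_real J2 + of_nat m2 + of_bool x2) * w ((m1, x1), (Suc m2, x2))"
  by (cases x1; cases x2) (simp_all add: tact_non_raising odd_gen_def algebra_simps)

lemma tact_L0:
  "tact c J1 J2 p L0 w ((m1, x1), (m2, x2))
     = (of_real (J1 + J2) + of_nat (m1 + m2) + (of_bool x1 + of_bool x2) / 2) * w ((m1, x1), (m2, x2))"
  by (cases x1; cases x2) (simp_all add: tact_non_raising odd_gen_def algebra_simps)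

lemma tact_Bg:
  "tact c J1 J2 p Bg w ((m1, x1), (m2, x2))
     = (if c then -1 else 1) * (of_real (J1 + J2) - (of_bool x1 + of_bool x2) / 2) * w ((m1, x1), (m2, x2))"
  by (cases c; cases x1; cases x2) (simp_all add: tact_non_raising odd_gen_def algebra_simps)

lemma tact_lower_X:
  "tact c J1 J2 p (if c then Wm else Vm) w ((m1, x1), (m2, x2))
     = - (if x1 then 0 else (2 * of_real J1 + of_nat m1) * w ((m1, True), (m2, x2)))
       - (-1) ^ (p + of_bool x1) * (if x2 then 0 else (2 * of_real J2 + of_nat m2) * w ((m1, x1), (m2, True)))"
  by (cases c; cases x1; cases x2) (simp_all add: tact_non_raising odd_gen_def algebra_simps)

lemma tact_lower_L:
  "tact c J1 J2 p (if c then Vm else Wm) w ((m1, x1), (m2, x2))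
     = - (if x1 then (of_nat m1 + 1) * w ((Suc m1, False), (m2, x2)) else 0)
       - (-1) ^ (p + of_bool x1) * (if x2 then (of_nat m2 + 1) * w ((m1, x1), (Suc m2, False)) else 0)"
  by (cases c; cases x1; cases x2) (simp_all add: tact_non_raising odd_gen_def algebra_simps)

lemma hw_vec_Lm: "tact c j1 j2 p Lm (hw_vec n j1 j2 p) = (\<lambda>_. 0)"
proof (rule tvec_eqI)
  fix m1 x1 m2 x2
  let ?w1 = "rGamma_weight (2 * j1 + 1) (2 * j2)" and ?w2 = "rGamma_weight (2 * j1) (2 * j2 + 1)"
  consider "n = Suc (m1 + m2)" "x1" "\<not> x2" | "n = Suc (m1 + m2)" "\<not> x1" "x2"
    | "n \<noteq> Suc (m1 + m2) \<or> x1 = x2" by blast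
  then show "tact c j1 j2 p Lm (hw_vec n j1 j2 p) ((m1, x1), (m2, x2)) = 0"
  proof cases
    case 1
    have "tact c j1 j2 p Lm (hw_vec n j1 j2 p) ((m1, x1), (m2, x2))
        = fact n * (-1) ^ m1 * ((of_nat m1 + 1) * (2 * of_real j1 + 1 + of_nat m1) * ?w1 (Suc m1) m2
                                - (of_nat m2 + 1) * (2 * of_real j2 + of_nat m2) * ?w1 m1 (Suc m2))"
      using 1 by (simp add: tact_Lm hw_vec_def algebra_simps)
    also have "\<dots> = 0"
      using rGamma_weight_Suc_left_shift[of m1 "2 * j1 + 1" "2 * j2" m2]
        rGamma_weight_Suc_right_shift[of m2 "2 * j2" "2 * j1 + 1" m1]
      by simp
    finally show ?thesis .
  next
    case 2
    have "tact c j1 j2 p Lm (hw_vec n j1 j2 p) ((m1, x1), (m2, x2))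
        = (-1) ^ p * fact n * (-1) ^ m1 * ((of_nat m2 + 1) * (2 * of_real j2 + 1 + of_nat m2) * ?w2 m1 (Suc m2)
                                - (of_nat m1 + 1) * (2 * of_real j1 + of_nat m1) * ?w2 (Suc m1) m2)"
      using 2 by (simp add: tact_Lm hw_vec_def algebra_simps)
    also have "\<dots> = 0"
      using rGamma_weight_Suc_left_shift[of m1 "2 * j1" "2 * j2 + 1" m2]
        rGamma_weight_Suc_right_shift[of m2 "2 * j2 + 1" "2 * j1" m1]
      by simp
    finally show ?thesis .
  next
    case 3
    then show ?thesis by (auto simp: tact_Lm hw_vec_def)
  qed
qed

lemma hw_vec_lower_X: "tact c j1 j2 p (if c then Wm else Vm) (hw_vec n j1 j2 p) = (\<lambda>_. 0)"
proof (rule tvec_eqI)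
  fix m1 x1 m2 x2
  consider "n = m1 + m2" "\<not> x1" "\<not> x2" | "n \<noteq> m1 + m2 \<or> x1 \<or> x2" by blast
  then show "tact c j1 j2 p (if c then Wm else Vm) (hw_vec n j1 j2 p) ((m1, x1), (m2, x2)) = 0"
  proof cases
    case 1
    have "(-1) ^ p * ((-1) ^ p * x) = (x :: complex)" for x
      by (simp flip: power_add mult.assoc)
    with 1 have "tact c j1 j2 p (if c then Wm else Vm) (hw_vec n j1 j2 p) ((m1, x1), (m2, x2))
        = fact n * (-1) ^ m1 * ((2 * of_real j2 + of_nat m2) * rGamma_weight (2 * j1) (2 * j2 + 1) m1 m2
                                - (2 * of_real j1 + of_nat m1) * rGamma_weight (2 * j1 + 1) (2 * j2) m1 m2)"
      by (simp add: tact_lower_X hw_vec_def algebra_simps)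
    also have "\<dots> = 0"
      using rGamma_weight_shift_left[of "2 * j1" m1 "2 * j2" m2]
        rGamma_weight_shift_right[of "2 * j2" m2 "2 * j1" m1]
      by simp
    finally show ?thesis .
  next
    case 2
    then show ?thesis by (auto simp: tact_lower_X hw_vec_def)
  qed
qed

lemma hw_vec_lower_L: "tact c j1 j2 p (if c then Vm else Wm) (hw_vec n j1 j2 p) = (\<lambda>_. 0)"
proof (rule tvec_eqI)
  fix m1 x1 m2 x2
  consider "n = Suc (m1 + m2)" "x1" "x2" | "n \<noteq> Suc (m1 + m2) \<or> \<not> x1 \<or> \<not> x2" by blast
  then show "tact c j1 j2 p (if c then Vm else Wm) (hw_vec n j1 j2 p) ((m1, x1), (m2, x2)) = 0"
  proof cases
    case 1
    then have "tact c j1 j2 p (if c then Vm else Wm) (hw_vec n j1 j2 p) ((m1, x1), (m2, x2))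
        = (-1) ^ p * fact n * (-1) ^ m1 * ((of_nat m2 + 1) * rGamma_weight (2 * j1 + 1) (2 * j2) m1 (Suc m2)
                                - (of_nat m1 + 1) * rGamma_weight (2 * j1) (2 * j2 + 1) (Suc m1) m2)"
      by (simp add: tact_lower_L hw_vec_def algebra_simps)
    also have "\<dots> = 0"
      using rGamma_weight_Suc_left[of m1 "2 * j1" "2 * j2 + 1" m2]
        rGamma_weight_Suc_right[of m2 "2 * j1 + 1" "2 * j2" m1]
      by simp
    finally show ?thesis .
  next
    case 2
    then show ?thesis by (auto simp: tact_lower_L hw_vec_def)
  qed
qed

lemma hw_vec_L0:
  "tact c j1 j2 p L0 (hw_vec n j1 j2 p) = (\<lambda>a. of_real (j1 + j2 + real n + 1/2) * hw_vec n j1 j2 p a)"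
  by (rule tvec_eqI) (auto simp: tact_L0 hw_vec_def algebra_simps)

lemma hw_vec_Bg:
  "tact c j1 j2 p Bg (hw_vec n j1 j2 p)
     = (\<lambda>a. of_real (if c then - (j1 + j2) + 1/2 else (j1 + j2) - 1/2) * hw_vec n j1 j2 p a)"
  by (rule tvec_eqI) (auto simp: tact_Bg hw_vec_def algebra_simps)

theorem mainTheorem3:
  fixes j1 j2 :: real and p :: nat and c :: bool and n :: nat
  assumes "p \<in> {0, 1}"
  defines "w \<equiv> (\<lambda>a. \<Sum>n1\<in>{0..n}. of_nat (n choose n1) * (-1) ^ n1 *
        (of_real (rGamma (2 * j1 + 1 + real n1) * rGamma (2 * j2 + real (n - n1))) *
           tens ((act c j1 Lp ^^ n1) (act c j1 (Xgen c) Omega))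
                ((act c j2 Lp ^^ (n - n1)) Omega) a
         - (-1) ^ p * of_real (rGamma (2 * j1 + real n1) * rGamma (2 * j2 + 1 + real (n - n1))) *
           tens ((act c j1 Lp ^^ n1) Omega)
                ((act c j2 Lp ^^ (n - n1)) (act c j2 (Xgen c) Omega)) a))"
  shows "(\<lambda>a. of_nat (fact n) * (-1) ^ (p + 1) *
            (\<Sum>k1\<in>{0..2 * n + 1}.
               (-1) ^ ((k1 + 1 - p) div 2) *
               of_real (rGamma (1 + real (k1 div 2)) * rGamma (1 + real ((2 * n + 1 - k1) div 2))
                        * rGamma (2 * j1 + real ((k1 + 1) div 2))
                        * rGamma (2 * j2 + real ((2 * n + 1 - k1 + 1) div 2))) *
               tens ((Uplus c j1 ^^ k1) Omega) ((Uplus c j2 ^^ (2 * n + 1 - k1)) Omega) a)) = w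
       \<and> tact c j1 j2 p Lm w = (\<lambda>_. 0)
       \<and> tact c j1 j2 p Vm w = (\<lambda>_. 0)
       \<and> tact c j1 j2 p Wm w = (\<lambda>_. 0)
       \<and> tact c j1 j2 p L0 w = (\<lambda>a. of_real (j1 + j2 + real n + 1/2) * w a)
       \<and> tact c j1 j2 p Bg w =
           (\<lambda>a. of_real (if c then - (j1 + j2) + 1/2 else (j1 + j2) - 1/2) * w a)"
proof -
  have w: "w = hw_vec n j1 j2 p"
    unfolding w_def by (rule Lplus_expansion_eq_hw_vec)
  show ?thesis
    unfolding w
    using Uplus_expansion_eq_hw_vec[OF assms(1)] hw_vec_Lm hw_vec_lower_X[of c] hw_vec_lower_L[of c]
      hw_vec_L0 hw_vec_Bg
    by (cases c) auto
qed

end
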